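(* Let $b\ge2$, $n\ge1$ be integers and $\mathcal D=\{d,\dots,d+b-1\}$ a set of consecutive integers containing $0$. For $i,j\in\Omega_n(b,\mathcal D)$, the transition probability $p_{i,j}=\Pr(C_{t+1}=j\mid C_t=i)$ of the $n$-carry process over $(b,\mathcal D)$ equals $$p_{i,j}=\frac{1}{b^n}\sum_{k=0}^{\,j-\left\lfloor \frac{d(n-1)+i}{b}\right\rfloor}(-1)^k\binom{n+1}{k}\binom{n+b(j+1-k)-d(n-1)-i-1}{n},$$ (an empty sum being $0$; all upper entries of the binomial coefficients in the range of summation are nonnegative integers, and $\binom{N}{n}=0$ for $0\le N<n$).
   Context: Carries process over $(b,\mathcal D)$: let $\{X_{k,i}\}_{1\le k\le n,\ i\ge 0}$ be independent random variables, each uniformly distributed on $\mathcal D$. Set $C_0=0$; for $i\ge 0$ let $A_i$ be the unique element of $\mathcal D$ with $A_i\equiv C_i+X_{1,i}+\dots+X_{n,i}\pmod b$, and set $C_{i+1}=(C_i+X_{1,i}+\dots+X_{n,i}-A_i)/b$. The state space $\Omega_n(b,\mathcal D)$ is the set of integers $c$ with $\Pr(C_i=c)>0$ for some $i\ge0$. *)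

theory Defs
  imports "HOL-Probability.Probability" "HOL-Number_Theory.Number_Theory"
begin

definition digits :: "nat \<Rightarrow> int \<Rightarrow> int set" where
  "digits b d = {d .. d + int b - 1}"

definition digit_tuples :: "nat \<Rightarrow> nat \<Rightarrow> int \<Rightarrow> int list set" where
  "digit_tuples n b d = {xs. length xs = n \<and> set xs \<subseteq> digits b d}"

definition carry_digit :: "nat \<Rightarrow> int \<Rightarrow> int \<Rightarrow> int list \<Rightarrow> int" where
  "carry_digit b d c xs =
     (THE a. a \<in> digits b d \<and> [a = c + sum_list xs] (mod int b))"

definition carry_step :: "nat \<Rightarrow> int \<Rightarrow> int \<Rightarrow> int list \<Rightarrow> int" where
  "carry_step b d c xs = (c + sum_list xs - carry_digit b d c xs) div int b"

definition digit_law :: "nat \<Rightarrow> nat \<Rightarrow> int \<Rightarrow> int list pmf" where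
  "digit_law n b d = pmf_of_set (digit_tuples n b d)"

primrec carry_dist :: "nat \<Rightarrow> nat \<Rightarrow> int \<Rightarrow> nat \<Rightarrow> int pmf" where
  "carry_dist n b d 0 = return_pmf 0"
| "carry_dist n b d (Suc t) =
     bind_pmf (carry_dist n b d t) (\<lambda>c. map_pmf (carry_step b d c) (digit_law n b d))"

definition carry_states :: "nat \<Rightarrow> nat \<Rightarrow> int \<Rightarrow> int set" where
  "carry_states n b d = {c. \<exists>t. pmf (carry_dist n b d t) c > 0}"

text \<open>Transition probability Pr(C_{t+1} = j | C_t = i): law of the next state
  given current state i, using the fresh independent digits of step t.\<close>
definition carry_trans :: "nat \<Rightarrow> nat \<Rightarrow> int \<Rightarrow> int \<Rightarrow> int \<Rightarrow> real" where
  "carry_trans n b d i j = pmf (map_pmf (carry_step b d i) (digit_law n b d)) j"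

end

theory Submission
  imports Defs
begin

text \<open>Subtracting \<open>d\<close> from every digit, a step from \<open>i\<close> lands in \<open>j\<close> exactly when
  \<open>(d(n-1) + i + Y) div b = j\<close> for the sum \<open>Y\<close> of \<open>n\<close> digits from \<open>{0..b-1}\<close>, i.e. when \<open>Y\<close>
  lies in a window of length \<open>b\<close>. The number of such digit tuples with sum at most \<open>T\<close> is
  \<open>\<Sum>k. (-1)^k C(n,k) C(T - bk + n, n)\<close> (inclusion-exclusion over the digits exceeding \<open>b - 1\<close>,
  here by induction on \<open>n\<close> with the hockey-stick identity); differencing at the two ends of the
  window merges \<open>C(n,k)\<close> and \<open>C(n,k-1)\<close> into \<open>C(n+1,k)\<close> by Pascal's rule.\<close>

definition choose_int :: "int \<Rightarrow> nat \<Rightarrow> int" where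
  "choose_int N k = (if N < 0 then 0 else int (nat N choose k))"

lemma choose_int_of_nat: "k > 0 \<Longrightarrow> choose_int N k = int (nat N choose k)"
  by (simp add: choose_int_def)

lemma choose_int_Suc: "choose_int (N + 1) (Suc k) = choose_int N (Suc k) + choose_int N k"
proof (cases "N \<ge> 0")
  case True
  then have "nat (N + 1) = Suc (nat N)" by simp
  with True show ?thesis by (simp add: choose_int_def)
next
  case False
  then show ?thesis by (cases "N = -1") (auto simp: choose_int_def)
qed

lemma sum_choose_int_lessThan:
  "(\<Sum>y<b. choose_int (N - int y) k) = choose_int (N + 1) (Suc k) - choose_int (N + 1 - int b) (Suc k)"
proof (induction b)
  case 0
  then show ?case by simp
next
  case (Suc b)
  have "choose_int (N + 1 - int b) (Suc k) = choose_int (N - int b) (Suc k) + choose_int (N - int b) k"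
    using choose_int_Suc[of "N - int b" k] by (simp add: algebra_simps)
  with Suc show ?case by simp
qed

lemma sum_alternating_choose_diff:
  fixes g :: "nat \<Rightarrow> 'a::comm_ring_1"
  shows "(\<Sum>k\<le>n. (-1)^k * of_nat (n choose k) * (g k - g (Suc k))) =
         (\<Sum>k\<le>Suc n. (-1)^k * of_nat (Suc n choose k) * g k)"
proof -
  have "(\<Sum>k\<le>Suc n. (-1)^k * of_nat (Suc n choose k) * g k) =
        g 0 + (\<Sum>k\<le>n. (-1)^(Suc k) * of_nat (Suc n choose Suc k) * g (Suc k))"
    unfolding sum.atMost_Suc_shift by simp
  also have "\<dots> = (g 0 + (\<Sum>k\<le>n. (-1)^(Suc k) * of_nat (n choose Suc k) * g (Suc k)))
      + (\<Sum>k\<le>n. (-1)^(Suc k) * of_nat (n choose k) * g (Suc k))"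
    by (simp add: sum.distrib[symmetric] algebra_simps)
  also have "g 0 + (\<Sum>k\<le>n. (-1)^(Suc k) * of_nat (n choose Suc k) * g (Suc k))
      = (\<Sum>k\<le>Suc n. (-1)^k * of_nat (n choose k) * g k)"
    unfolding sum.atMost_Suc_shift by simp
  also have "\<dots> = (\<Sum>k\<le>n. (-1)^k * of_nat (n choose k) * g k)"
    by (simp add: binomial_eq_0)
  finally show ?thesis by (simp add: sum_subtractf sum_negf algebra_simps)
qed

lemma int_div_eq_iff:
  fixes x j b :: int
  assumes "0 < b"
  shows "x div b = j \<longleftrightarrow> b * j \<le> x \<and> x < b * j + b"
proof -
  have "(x + (- j) * b) div b = - j + x div b"
    using assms by (intro div_mult_self1) simp
  then have "x div b = j \<longleftrightarrow> (x - b * j) div b = 0"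
    by (simp add: algebra_simps) linarith
  also have "\<dots> \<longleftrightarrow> 0 \<le> x - b * j \<and> x - b * j < b"
    using assms by (auto simp: zdiv_eq_0_iff)
  finally show ?thesis by auto
qed

lemma sum_int_atLeastAtMost_eq_if_vanishing:
  fixes h :: "int \<Rightarrow> 'a::comm_monoid_add"
  assumes "\<And>k. k > a \<Longrightarrow> h k = 0" and "\<And>k. k > c \<Longrightarrow> h k = 0"
  shows "sum h {0..a} = sum h {0..c}"
proof -
  have "sum h {0..x} = sum h {0..max a c}" if "x = a \<or> x = c" for x
    by (rule sum.mono_neutral_left) (use that assms in auto)
  then show ?thesis by metis
qed

definition count_sum_le :: "nat \<Rightarrow> nat \<Rightarrow> int \<Rightarrow> int" where
  "count_sum_le n b T = int (card {ys \<in> digit_tuples n b 0. sum_list ys \<le> T})"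

lemma digit_tuples_eq_lists: "digit_tuples n b d = {xs. set xs \<subseteq> digits b d \<and> length xs = n}"
  by (auto simp: digit_tuples_def)

lemma finite_digit_tuples: "finite (digit_tuples n b d)"
  by (simp add: digit_tuples_eq_lists finite_lists_length_eq digits_def)

lemma card_digit_tuples: "card (digit_tuples n b d) = b ^ n"
  by (simp add: digit_tuples_eq_lists card_lists_length_eq digits_def)

lemma count_sum_le_Suc: "count_sum_le (Suc n) b T = (\<Sum>y<b. count_sum_le n b (T - int y))"
proof -
  let ?ind = "\<lambda>P. if P then 1 else 0 :: int"
  have count: "count_sum_le n b T = (\<Sum>ys\<in>digit_tuples n b 0. ?ind (sum_list ys \<le> T))" for n T
    by (simp add: count_sum_le_def sum.inter_filter[symmetric] finite_digit_tuples)
  have digits_0: "digits b 0 = int ` {..<b}"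
    by (auto simp: digits_def image_iff intro!: bexI[of _ "nat x" for x])
  have "count_sum_le (Suc n) b T =
      (\<Sum>p\<in>digit_tuples n b 0 \<times> digits b 0. ?ind (sum_list (snd p # fst p) \<le> T))"
    unfolding count digit_tuples_eq_lists lists_length_Suc_eq
    by (subst sum.reindex) (auto simp: inj_split_Cons case_prod_beta)
  also have "\<dots> = (\<Sum>ys\<in>digit_tuples n b 0. \<Sum>y\<in>digits b 0. ?ind (sum_list ys \<le> T - y))"
    by (simp add: sum.cartesian_product case_prod_beta add.commute le_diff_eq)
  also have "\<dots> = (\<Sum>y\<in>digits b 0. count_sum_le n b (T - y))"
    unfolding count by (rule sum.swap)
  also have "\<dots> = (\<Sum>y<b. count_sum_le n b (T - int y))"
    by (simp add: digits_0 sum.reindex)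
  finally show ?thesis .
qed

lemma count_sum_le_eq:
  "count_sum_le n b T = (\<Sum>k\<le>n. (-1)^k * int (n choose k) * choose_int (T - int b * int k + int n) n)"
proof (induction n arbitrary: T)
  case 0
  have "{ys \<in> digit_tuples 0 b 0. sum_list ys \<le> T} = (if 0 \<le> T then {[]} else {})"
    by (auto simp: digit_tuples_def)
  then show ?case by (simp add: count_sum_le_def choose_int_def)
next
  case (Suc n)
  have "count_sum_le (Suc n) b T = (\<Sum>k\<le>n. (-1)^k * int (n choose k) *
      (\<Sum>y<b. choose_int ((T - int b * int k + int n) - int y) n))"
    unfolding count_sum_le_Suc Suc.IH
    by (subst sum.swap) (simp add: sum_distrib_left algebra_simps)
  also have "\<dots> = (\<Sum>k\<le>n. (-1)^k * int (n choose k) *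
      (choose_int (T - int b * int k + int (Suc n)) (Suc n)
       - choose_int (T - int b * int (Suc k) + int (Suc n)) (Suc n)))"
    unfolding sum_choose_int_lessThan by (simp add: algebra_simps)
  also have "\<dots> = (\<Sum>k\<le>Suc n. (-1)^k * int (Suc n choose k) *
      choose_int (T - int b * int k + int (Suc n)) (Suc n))"
    by (rule sum_alternating_choose_diff)
  finally show ?case .
qed

lemma card_digit_sum_div_eq:
  assumes "b > 0"
  shows "int (card {ys \<in> digit_tuples n b 0. (m + sum_list ys) div int b = j}) =
    (\<Sum>k\<le>Suc n. (-1)^k * int (Suc n choose k) *
       choose_int (int n + int b * (j + 1 - int k) - m - 1) n)"
proof -
  let ?N = "int n + int b * (j + 1) - m - 1"
  let ?le = "\<lambda>T. {ys \<in> digit_tuples n b 0. sum_list ys \<le> T}"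
  have window: "{ys \<in> digit_tuples n b 0. (m + sum_list ys) div int b = j} =
      ?le (int b * j + int b - 1 - m) - ?le (int b * j - 1 - m)"
    using assms by (auto simp: int_div_eq_iff algebra_simps)
  have sub: "?le (int b * j - 1 - m) \<subseteq> ?le (int b * j + int b - 1 - m)"
    by auto
  have "int (card {ys \<in> digit_tuples n b 0. (m + sum_list ys) div int b = j}) =
      count_sum_le n b (int b * j + int b - 1 - m) - count_sum_le n b (int b * j - 1 - m)"
    unfolding window count_sum_le_def
    using card_Diff_subset[OF _ sub] card_mono[OF _ sub] by (simp add: finite_digit_tuples of_nat_diff)
  also have "\<dots> = (\<Sum>k\<le>n. (-1)^k * int (n choose k) *
      (choose_int (?N - int b * int k) n - choose_int (?N - int b * int (Suc k)) n))"
    unfolding count_sum_le_eq sum_subtractf[symmetric] by (simp add: algebra_simps)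
  also have "\<dots> = (\<Sum>k\<le>Suc n. (-1)^k * int (Suc n choose k) * choose_int (?N - int b * int k) n)"
    by (rule sum_alternating_choose_diff)
  finally show ?thesis by (simp add: algebra_simps)
qed

lemma carry_digit_eq:
  assumes "b > 0"
  shows "carry_digit b d c xs = d + (c + sum_list xs - d) mod int b"
  unfolding carry_digit_def
proof (rule the_equality)
  show "d + (c + sum_list xs - d) mod int b \<in> digits b d \<and>
        [d + (c + sum_list xs - d) mod int b = c + sum_list xs] (mod int b)"
    using assms by (simp add: digits_def cong_def mod_add_right_eq)
next
  fix a assume a: "a \<in> digits b d \<and> [a = c + sum_list xs] (mod int b)"
  then have "(a - d) mod int b = (c + sum_list xs - d) mod int b"
    by (intro mod_diff_cong) (simp_all add: cong_def)
  moreover have "(a - d) mod int b = a - d" using a assms by (simp add: digits_def)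
  ultimately show "a = d + (c + sum_list xs - d) mod int b" by simp
qed

lemma carry_step_eq:
  assumes "b > 0"
  shows "carry_step b d c xs = (c + sum_list xs - d) div int b"
proof -
  let ?x = "c + sum_list xs - d"
  have "carry_step b d c xs = (?x - ?x mod int b) div int b"
    unfolding carry_step_def carry_digit_eq[OF assms] by (simp add: algebra_simps)
  also have "\<dots> = ?x div int b"
    using assms by (simp add: minus_mod_eq_mult_div)
  finally show ?thesis .
qed

lemma digit_tuples_shift: "digit_tuples n b d = map (\<lambda>x. x + d) ` digit_tuples n b 0"
proof (intro equalityI subsetI)
  fix xs assume "xs \<in> digit_tuples n b d"
  then have "map (\<lambda>x. x - d) xs \<in> digit_tuples n b 0"
    by (auto simp: digit_tuples_def digits_def)
  moreover have "xs = map (\<lambda>x. x + d) (map (\<lambda>x. x - d) xs)" by (simp add: comp_def)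
  ultimately show "xs \<in> map (\<lambda>x. x + d) ` digit_tuples n b 0" by blast
qed (force simp: digit_tuples_def digits_def)

lemma sum_list_map_add_const: "sum_list (map (\<lambda>x. x + d) ys) = sum_list ys + int (length ys) * (d::int)"
  by (induction ys) (auto simp: algebra_simps)

lemma carry_trans_eq_card:
  assumes "b > 0"
  shows "carry_trans n b d i j =
    real (card {ys \<in> digit_tuples n b 0. (d * (int n - 1) + i + sum_list ys) div int b = j}) / real b ^ n"
proof -
  let ?shift = "map (\<lambda>x. x + d)"
  have "digit_tuples n b d \<noteq> {}"
    using card_digit_tuples[of n b d] assms by (metis card.empty power_not_zero not_gr0)
  then have "carry_trans n b d i j =
      real (card {xs \<in> digit_tuples n b d. carry_step b d i xs = j}) / real b ^ n"
    unfolding carry_trans_def digit_law_def pmf_map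
    by (simp add: measure_pmf_of_set finite_digit_tuples card_digit_tuples vimage_def Int_def conj_commute)
  also have "{xs \<in> digit_tuples n b d. carry_step b d i xs = j} =
      ?shift ` {ys \<in> digit_tuples n b 0. (d * (int n - 1) + i + sum_list ys) div int b = j}"
    unfolding digit_tuples_shift[of n b d]
    by (auto simp: carry_step_eq[OF assms] sum_list_map_add_const digit_tuples_def algebra_simps)
  also have "card \<dots> = card {ys \<in> digit_tuples n b 0. (d * (int n - 1) + i + sum_list ys) div int b = j}"
    by (rule card_image) (simp add: inj_on_def)
  finally show ?thesis .
qed

lemma carry_trans_eq_alternating_sum:
  assumes "b > 0"
  shows "carry_trans n b d i j = 1 / real b ^ n * real_of_int
    (\<Sum>k\<le>Suc n. (-1)^k * int (Suc n choose k) *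
       choose_int (int n + int b * (j + 1 - int k) - (d * (int n - 1) + i) - 1) n)"
  unfolding carry_trans_eq_card[OF assms] card_digit_sum_div_eq[OF assms, symmetric] by simp

lemma mult_le_of_gt_diff_div:
  fixes m j k :: int
  assumes "b > 0" and "k > j - m div int b"
  shows "int b * (j + 1 - k) \<le> m"
proof -
  have "int b * (j + 1 - k) \<le> int b * (m div int b)"
    using assms by (intro mult_left_mono) auto
  also have "\<dots> \<le> m"
    using assms(1) minus_mod_eq_mult_div[of m "int b"] pos_mod_sign[of "int b" m] by linarith
  finally show ?thesis .
qed

theorem theorem2:
  fixes b n :: nat and d i j :: int
  assumes "b \<ge> 2" and "n \<ge> 1"
    and "d \<le> 0" and "0 \<le> d + int b - 1"
    and "i \<in> carry_states n b d" and "j \<in> carry_states n b d"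
  shows "carry_trans n b d i j =
    1 / real b ^ n *
    (\<Sum>k\<in>{0 .. j - \<lfloor>real_of_int (d * (int n - 1) + i) / real b\<rfloor>}.
        (-1) ^ nat k * real ((n + 1) choose nat k) *
        real (nat (int n + int b * (j + 1 - k) - d * (int n - 1) - i - 1) choose n))"
proof -
  have b0: "b > 0" using assms(1) by simp
  define m where "m = d * (int n - 1) + i"
  define h where "h = (\<lambda>k::int. (-1) ^ nat k * real ((n + 1) choose nat k) *
    real (nat (int n + int b * (j + 1 - k) - d * (int n - 1) - i - 1) choose n))"
  have floor_eq: "\<lfloor>real_of_int (d * (int n - 1) + i) / real b\<rfloor> = m div int b"
    using floor_divide_of_int_eq[of m "int b", where 'a=real] by (simp add: m_def)
  have h_beyond_Suc_n: "h k = 0" if "k > int (Suc n)" for k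
  proof -
    from that have "n + 1 < nat k" by linarith
    then show ?thesis by (simp add: h_def)
  qed
  have h_beyond_window: "h k = 0" if "k > j - m div int b" for k
  proof -
    have "nat (int n + int b * (j + 1 - k) - d * (int n - 1) - i - 1) < n"
      using mult_le_of_gt_diff_div[OF b0 that] assms(2) by (simp add: m_def)
    then show ?thesis by (simp add: h_def)
  qed
  note carry_trans_eq_alternating_sum[OF b0, of n d i j, folded m_def]
  also have "real_of_int (\<Sum>k\<le>Suc n. (-1)^k * int (Suc n choose k) *
      choose_int (int n + int b * (j + 1 - int k) - m - 1) n) = (\<Sum>k\<le>Suc n. h (int k))"
    unfolding of_int_sum using assms(2)
    by (intro sum.cong) (simp_all add: h_def m_def choose_int_of_nat diff_diff_eq)
  also have "\<dots> = sum h {0..int (Suc n)}"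
    using sum.atLeast_int_atMost_int_shift[of h 0 "Suc n"] by (simp add: atMost_atLeast0)
  also have "\<dots> = sum h {0..j - m div int b}"
    using h_beyond_Suc_n h_beyond_window by (rule sum_int_atLeastAtMost_eq_if_vanishing)
  finally show ?thesis unfolding h_def floor_eq .
qed

end
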